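(* Let $M=(E,\mathcal{I})$ be a matroid, $\Delta$ a positive integer, $w:E\to\{-\Delta,\dots,\Delta\}$ integer weights and $\mu\ge 0$. Let $A,B\in\mathcal{I}$ be disjoint with $|A|=|B|$ and $|w(A)-w(B)|\le\mu$. If $|A|=|B|\ge(2\Delta+1)^5+\mu$, then there exists $A'\in\mathcal{I}$ with $A'\neq A$, \[ w(A')=w(A)\quad\text{and}\quad |A'|=|A|. \]
   Context: $w(S)=\sum_{e\in S}w(e)$ for $S\subseteq E$. *)

theory Defs
  imports Complex_Main
begin

definition matroid :: "'a set \<Rightarrow> 'a set set \<Rightarrow> bool" where
  "matroid E I \<longleftrightarrow> finite E \<and> (\<forall>X\<in>I. X \<subseteq> E) \<and> {} \<in> I \<and>
     (\<forall>X Y. Y \<in> I \<longrightarrow> X \<subseteq> Y \<longrightarrow> X \<in> I) \<and>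
     (\<forall>X Y. X \<in> I \<longrightarrow> Y \<in> I \<longrightarrow> card X < card Y \<longrightarrow>
        (\<exists>e \<in> Y - X. insert e X \<in> I))"

definition wsum :: "('a \<Rightarrow> int) \<Rightarrow> 'a set \<Rightarrow> int" where
  "wsum w S = (\<Sum>e\<in>S. w e)"

end

theory Submission
  imports Defs
begin

(* Write A_a and B_b for the elements of A and B of weight a and b. After truncating
   the matroid at |A|, A is a basis. Let rho(a,b) be the rank of B_b in the contraction by A - A_a,
   i.e. how many elements of B_b can be added independently to A - A_a.
   If rho(a,a) > 0, some element of B_a replaces one of A_a. If rho(a,b) >= 4 Delta for some a < b
   and rho(c,d) >= 4 Delta for some d < c, then c - d elements of B_b and b - a elements of B_d can
   be exchanged simultaneously for elements of A_a and A_c, and the weight changes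
   (c - d)(b - a) and (b - a)(d - c) cancel; the simultaneous exchange comes from an
   intermediate-value argument along a basis-exchange walk.
   Otherwise, after possibly replacing w by -w, rho(a,b) < 4 Delta whenever b <= a. Submodularity
   of the rank then bounds |{x in B. w x <= t}| by |{x in A. w x < t}| + 4 Delta (2 Delta + 1)^2
   for every threshold t, and summing over t in [-Delta, Delta] gives
   |A| <= w(B) - w(A) + 4 Delta (2 Delta + 1)^3 < (2 Delta + 1)^5 + |w(A) - w(B)|, contradicting
   the size assumption. *)

lemma wsum_const:
  assumes "\<And>x. x \<in> X \<Longrightarrow> w x = c"
  shows "wsum w X = int (card X) * c"
  using assms unfolding wsum_def by simp

lemma wsum_Un_levels:
  assumes "finite X1" "finite X2" "X1 \<inter> X2 = {}" "\<And>x. x \<in> X1 \<Longrightarrow> w x = a" "\<And>x. x \<in> X2 \<Longrightarrow> w x = b"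
  shows "wsum w (X1 \<union> X2) = int (card X1) * a + int (card X2) * b"
proof -
  have "wsum w (X1 \<union> X2) = wsum w X1 + wsum w X2"
    unfolding wsum_def using assms(1-3) by (rule sum.union_disjoint)
  then show ?thesis using wsum_const[of X1 w a] wsum_const[of X2 w b] assms(4,5) by simp
qed

lemma wsum_exchange:
  assumes "finite A" "finite Y" "X \<subseteq> A" "Y \<inter> A = {}"
  shows "wsum w ((A - X) \<union> Y) = wsum w A - wsum w X + wsum w Y"
proof -
  have "wsum w ((A - X) \<union> Y) = wsum w (A - X) + wsum w Y"
    unfolding wsum_def using assms by (intro sum.union_disjoint) auto
  moreover have "wsum w A = wsum w (A - X) + wsum w X"
    unfolding wsum_def using assms by (intro sum.subset_diff) auto
  ultimately show ?thesis by simp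
qed

lemma wsum_uminus: "wsum (\<lambda>x. - w x) S = - wsum w S"
  unfolding wsum_def by (simp add: sum_negf)

lemma sum_card_filter_swap:
  assumes "finite X" "finite T"
  shows "(\<Sum>t\<in>T. card {x\<in>X. R x t}) = (\<Sum>x\<in>X. card {t\<in>T. R x t})"
proof -
  have "(\<Sum>t\<in>T. card {x\<in>X. R x t}) = (\<Sum>t\<in>T. \<Sum>x\<in>X. of_bool (R x t))"
    using assms(1) by (simp add: Int_def)
  also have "\<dots> = (\<Sum>x\<in>X. \<Sum>t\<in>T. of_bool (R x t))"
    by (rule sum.swap)
  also have "\<dots> = (\<Sum>x\<in>X. card {t\<in>T. R x t})"
    using assms(2) by (simp add: Int_def)
  finally show ?thesis .
qed

lemma sum_card_threshold:
  fixes u :: "'a \<Rightarrow> int"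
  assumes "finite X" "\<And>x. x \<in> X \<Longrightarrow> l \<le> u x \<and> u x \<le> h + 1"
  shows "(\<Sum>\<theta>\<in>{l..h}. int (card {x\<in>X. u x \<le> \<theta>})) = (\<Sum>x\<in>X. h - u x + 1)"
proof -
  have "(\<Sum>\<theta>\<in>{l..h}. card {x\<in>X. u x \<le> \<theta>}) = (\<Sum>x\<in>X. card {\<theta>\<in>{l..h}. u x \<le> \<theta>})"
    using assms(1) by (rule sum_card_filter_swap) simp
  moreover have "{\<theta>\<in>{l..h}. u x \<le> \<theta>} = {u x..h}" if "x \<in> X" for x
    using assms(2)[OF that] by auto
  ultimately have "(\<Sum>\<theta>\<in>{l..h}. card {x\<in>X. u x \<le> \<theta>}) = (\<Sum>x\<in>X. nat (h - u x + 1))"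
    by (simp cong: sum.cong)
  then have "(\<Sum>\<theta>\<in>{l..h}. int (card {x\<in>X. u x \<le> \<theta>})) = (\<Sum>x\<in>X. int (nat (h - u x + 1)))"
    by (simp only: flip: of_nat_sum)
  also have "\<dots> = (\<Sum>x\<in>X. h - u x + 1)"
    by (rule sum.cong[OF refl]) (use assms(2) in fastforce)
  finally show ?thesis .
qed

lemma sum_card_fibres:
  assumes "finite X" "finite T"
  shows "(\<Sum>t\<in>T. card {x\<in>X. u x = t}) = card {x\<in>X. u x \<in> T}"
proof -
  have "(\<Sum>t\<in>T. card {x\<in>X. u x = t}) = card (\<Union>t\<in>T. {x\<in>X. u x = t})"
    using assms by (intro card_UN_disjoint[symmetric]) auto
  also have "(\<Union>t\<in>T. {x\<in>X. u x = t}) = {x\<in>X. u x \<in> T}" by blast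
  finally show ?thesis .
qed

(* Walk from K1 towards K2 by single exchanges: each step changes card (K \<inter> P) by at most one. *)
lemma exchange_family_intermediate_card:
  assumes exchange: "\<And>K K' x. K \<in> F \<Longrightarrow> K' \<in> F \<Longrightarrow> x \<in> K - K' \<Longrightarrow> \<exists>y\<in>K' - K. insert y (K - {x}) \<in> F"
    and finite: "\<And>K. K \<in> F \<Longrightarrow> finite K"
    and same_card: "\<And>K K'. K \<in> F \<Longrightarrow> K' \<in> F \<Longrightarrow> card K = card K'"
    and "K1 \<in> F" "K2 \<in> F" "card (K1 \<inter> P) \<le> t" "t \<le> card (K2 \<inter> P)"
  shows "\<exists>K\<in>F. card (K \<inter> P) = t"
  using assms(4,6)
proof (induction "card (K2 - K1)" arbitrary: K1 rule: less_induct)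
  case less
  show ?case
  proof (cases "card (K1 \<inter> P) = t")
    case True
    with less.prems show ?thesis by blast
  next
    case False
    have "\<not> K1 \<subseteq> K2"
    proof
      assume "K1 \<subseteq> K2"
      then have "K1 = K2"
        using card_subset_eq finite same_card \<open>K2 \<in> F\<close> less.prems(1) by metis
      with False less.prems(2) \<open>t \<le> card (K2 \<inter> P)\<close> show False by simp
    qed
    then obtain x where x: "x \<in> K1 - K2" by blast
    obtain y where y: "y \<in> K2 - K1" "insert y (K1 - {x}) \<in> F"
      using exchange[OF less.prems(1) \<open>K2 \<in> F\<close> x] by blast
    have fin: "finite K1" "finite K2" using finite less.prems(1) \<open>K2 \<in> F\<close> by blast+
    have "card (insert y (K1 - {x}) \<inter> P) \<le> card (insert y (K1 \<inter> P))"
      using fin by (intro card_mono) auto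
    also have "\<dots> \<le> card (K1 \<inter> P) + 1"
      using fin by (simp add: card_insert_if)
    finally have "card (insert y (K1 - {x}) \<inter> P) \<le> t"
      using less.prems(2) False by linarith
    moreover have "card (K2 - insert y (K1 - {x})) < card (K2 - K1)"
    proof -
      have "K2 - insert y (K1 - {x}) = (K2 - K1) - {y}" using x by blast
      then show ?thesis using card_Diff1_less[of "K2 - K1" y] y(1) fin by simp
    qed
    ultimately show ?thesis using less.hyps y(2) by blast
  qed
qed

locale Matroid =
  fixes E :: "'a set" and I :: "'a set set"
  assumes matroid: "matroid E I"
begin

lemma finite_ground: "finite E"
  and indep_subset_ground: "X \<in> I \<Longrightarrow> X \<subseteq> E"
  and empty_indep: "{} \<in> I"
  and indep_subset: "Y \<in> I \<Longrightarrow> X \<subseteq> Y \<Longrightarrow> X \<in> I"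
  and augment: "X \<in> I \<Longrightarrow> Y \<in> I \<Longrightarrow> card X < card Y \<Longrightarrow> \<exists>e\<in>Y - X. insert e X \<in> I"
  using matroid unfolding matroid_def by blast+

lemma indep_finite: "X \<in> I \<Longrightarrow> finite X"
  using finite_ground indep_subset_ground finite_subset by blast

lemma augment_to_card:
  assumes X: "X \<in> I" and Y: "Y \<in> I" and "card X \<le> n" "n \<le> card Y"
  shows "\<exists>W\<subseteq>Y - X. X \<union> W \<in> I \<and> card (X \<union> W) = n"
  using assms(3,4)
proof (induction n rule: dec_induct)
  case base
  show ?case using X by (intro exI[of _ "{}"]) simp
next
  case (step n)
  then obtain W where W: "W \<subseteq> Y - X" "X \<union> W \<in> I" "card (X \<union> W) = n" by auto
  with step.hyps(2) step.prems obtain e where e: "e \<in> Y - (X \<union> W)" "insert e (X \<union> W) \<in> I"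
    using augment[OF W(2) Y] by auto
  moreover have "finite (X \<union> W)" using W(2) indep_finite by blast
  ultimately show ?case using W by (intro exI[of _ "insert e W"]) auto
qed

(* Maximum cardinality; in a matroid this is the same as inclusion-maximality. *)
definition basis :: "'a set \<Rightarrow> bool" where
  "basis X \<longleftrightarrow> X \<in> I \<and> (\<forall>Y\<in>I. card Y \<le> card X)"

lemma basis_indep: "basis A \<Longrightarrow> A \<in> I"
  unfolding basis_def by blast

lemma indep_card_le_basis: "basis A \<Longrightarrow> X \<in> I \<Longrightarrow> card X \<le> card A"
  unfolding basis_def by blast

lemma basis_card_eq: "basis X \<Longrightarrow> basis Y \<Longrightarrow> card X = card Y"
  unfolding basis_def by (simp add: le_antisym)

lemma basis_exchange:
  assumes X: "basis X" and Y: "basis Y" and x: "x \<in> X - Y"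
  shows "\<exists>y\<in>Y - X. basis (insert y (X - {x}))"
proof -
  have XI: "X \<in> I" and YI: "Y \<in> I" using X Y unfolding basis_def by auto
  have finX: "finite X" using XI indep_finite by blast
  have pos: "0 < card X" using x finX card_gt_0_iff by blast
  then have "card (X - {x}) < card Y"
    using x finX basis_card_eq[OF X Y] by simp
  then obtain y where y: "y \<in> Y - (X - {x})" "insert y (X - {x}) \<in> I"
    using augment[OF indep_subset[OF XI] YI] by blast
  then have "y \<in> Y - X" using x by blast
  moreover have "card (insert y (X - {x})) = card X"
    using y x finX pos by simp
  ultimately show ?thesis using y(2) X unfolding basis_def by auto
qed

definition rank :: "'a set \<Rightarrow> nat" where
  "rank S = Max (card ` {X. X \<subseteq> S \<and> X \<in> I})"

lemma finite_indep_subsets: "finite {X. X \<subseteq> S \<and> X \<in> I}"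
proof (rule finite_subset)
  show "{X. X \<subseteq> S \<and> X \<in> I} \<subseteq> Pow E" using indep_subset_ground by blast
  show "finite (Pow E)" using finite_ground by simp
qed

lemma indep_card_le_rank: "X \<subseteq> S \<Longrightarrow> X \<in> I \<Longrightarrow> card X \<le> rank S"
  unfolding rank_def using finite_indep_subsets by (intro Max_ge) auto

lemma rank_witness: "\<exists>X\<subseteq>S. X \<in> I \<and> card X = rank S"
proof -
  have "rank S \<in> card ` {X. X \<subseteq> S \<and> X \<in> I}"
    unfolding rank_def using finite_indep_subsets empty_indep by (intro Max_in) auto
  then show ?thesis by auto
qed

lemma rank_mono: "S \<subseteq> T \<Longrightarrow> rank S \<le> rank T"
  by (metis rank_witness indep_card_le_rank order_trans)

lemma rank_indep: "X \<in> I \<Longrightarrow> rank X = card X"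
  by (metis rank_witness indep_card_le_rank indep_finite card_mono order_antisym order_refl)

lemma rank_le_basis: "basis A \<Longrightarrow> rank S \<le> card A"
  using rank_witness[of S] unfolding basis_def by auto

lemma rank_basis_Un: "basis A \<Longrightarrow> rank (A \<union> U) = card A"
  using rank_le_basis indep_card_le_rank[of A "A \<union> U"] basis_indep by (simp add: le_antisym)

lemma rank_extend:
  assumes "X \<subseteq> S" "X \<in> I"
  obtains Y where "X \<subseteq> Y" "Y \<subseteq> S" "Y \<in> I" "card Y = rank S"
proof -
  obtain Z where Z: "Z \<subseteq> S" "Z \<in> I" "card Z = rank S" using rank_witness by blast
  moreover have "card X \<le> rank S" using indep_card_le_rank assms by blast
  ultimately obtain W where "W \<subseteq> Z - X" "X \<union> W \<in> I" "card (X \<union> W) = rank S"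
    using augment_to_card[OF assms(2) Z(2), of "rank S"] by auto
  with Z assms show thesis by (intro that[of "X \<union> W"]) auto
qed

lemma rank_submodular: "rank (S \<union> T) + rank (S \<inter> T) \<le> rank S + rank T"
proof -
  obtain X0 where X0: "X0 \<subseteq> S \<inter> T" "X0 \<in> I" "card X0 = rank (S \<inter> T)"
    using rank_witness by blast
  obtain X where X: "X0 \<subseteq> X" "X \<subseteq> S \<union> T" "X \<in> I" "card X = rank (S \<union> T)"
    using rank_extend[of X0 "S \<union> T"] X0 by blast
  have finX: "finite X" using X(3) indep_finite by blast
  have "card (X \<inter> S) \<le> rank S" "card (X \<inter> T) \<le> rank T"
    using X(3) by (auto intro!: indep_card_le_rank intro: indep_subset)
  moreover have "card X0 \<le> card (X \<inter> S \<inter> T)"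
    using X0 X finX by (intro card_mono) auto
  moreover have "card (X \<inter> S \<inter> T) \<le> rank (S \<inter> T)"
    using X(3) by (auto intro!: indep_card_le_rank intro: indep_subset)
  moreover have "card (X \<inter> S) + card (X \<inter> T) = card X + card (X \<inter> S \<inter> T)"
  proof -
    have "(X \<inter> S) \<union> (X \<inter> T) = X" "(X \<inter> S) \<inter> (X \<inter> T) = X \<inter> S \<inter> T" using X(2) by auto
    then show ?thesis using card_Un_Int[of "X \<inter> S" "X \<inter> T"] finX by simp
  qed
  ultimately show ?thesis using X0(3) X(4) by linarith
qed

definition contract_rank :: "'a set \<Rightarrow> 'a set \<Rightarrow> nat" where
  "contract_rank C U = rank (C \<union> U) - rank C"

lemma contract_rank_Un_le: "contract_rank C (U \<union> V) \<le> contract_rank C U + contract_rank C V"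
proof -
  have "(C \<union> U) \<union> (C \<union> V) = C \<union> (U \<union> V)" by blast
  with rank_submodular[of "C \<union> U" "C \<union> V"]
  have "rank (C \<union> (U \<union> V)) + rank ((C \<union> U) \<inter> (C \<union> V)) \<le> rank (C \<union> U) + rank (C \<union> V)"
    by simp
  moreover have "rank C \<le> rank ((C \<union> U) \<inter> (C \<union> V))" "rank C \<le> rank (C \<union> U)" "rank C \<le> rank (C \<union> V)"
    by (auto intro: rank_mono)
  ultimately show ?thesis unfolding contract_rank_def by linarith
qed

lemma contract_rank_UN_le:
  "finite T \<Longrightarrow> contract_rank C (\<Union>t\<in>T. U t) \<le> (\<Sum>t\<in>T. contract_rank C (U t))"
proof (induction T rule: finite_induct)
  case empty
  then show ?case by (simp add: contract_rank_def)
next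
  case (insert t T)
  then show ?case using contract_rank_Un_le[of C "U t" "\<Union>t\<in>T. U t"] by simp
qed

lemma contract_rank_witness:
  assumes C: "C \<in> I"
  obtains Y where "Y \<subseteq> U - C" "C \<union> Y \<in> I" "card Y = contract_rank C U"
proof -
  obtain Z where Z: "C \<subseteq> Z" "Z \<subseteq> C \<union> U" "Z \<in> I" "card Z = rank (C \<union> U)"
    by (rule rank_extend[of C "C \<union> U", OF _ C]) blast
  have "card (Z - C) = contract_rank C U"
    using Z(4) rank_indep[OF C] card_Diff_subset[OF finite_subset[OF Z(1) indep_finite[OF Z(3)]] Z(1)]
    unfolding contract_rank_def by simp
  moreover have "C \<union> (Z - C) = Z" using Z(1) by blast
  ultimately show thesis using Z by (intro that[of "Z - C"]) auto
qed

lemma contract_rank_le_card_diff: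
  assumes A: "basis A" and C: "C \<subseteq> A"
  shows "contract_rank C U \<le> card (A - C)"
proof -
  have "finite A" using A basis_indep indep_finite by blast
  then have "card (A - C) = card A - card C" using card_Diff_subset[OF finite_subset[OF C] C] by blast
  moreover have "rank C = card C" using rank_indep indep_subset[OF basis_indep[OF A] C] by blast
  ultimately show ?thesis using rank_le_basis[OF A, of "C \<union> U"] unfolding contract_rank_def by linarith
qed

lemma contract_rank_fibres_le:
  fixes u :: "'a \<Rightarrow> 'b"
  assumes A: "basis A" and "finite T"
  shows "contract_rank (A - {a\<in>A. u a \<in> T}) U \<le> (\<Sum>t\<in>T. contract_rank (A - {a\<in>A. u a = t}) U)"
  using assms(2)
proof (induction T rule: finite_induct)
  case empty
  then show ?case using rank_basis_Un[OF A] rank_indep[OF basis_indep[OF A]]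
    by (simp add: contract_rank_def)
next
  case (insert t T)
  define S1 S2 where "S1 = A - {a\<in>A. u a = t}" and "S2 = A - {a\<in>A. u a \<in> T}"
  have finA: "finite A" using A basis_indep indep_finite by blast
  have union: "S1 \<union> S2 = A" unfolding S1_def S2_def using insert.hyps(2) by blast
  have inter: "S1 \<inter> S2 = A - {a\<in>A. u a \<in> insert t T}" unfolding S1_def S2_def by blast
  have rank_S: "rank S = card S" if "S \<subseteq> A" for S
    using that A by (metis basis_indep indep_subset rank_indep)
  have r1: "rank S1 = card S1" and r2: "rank S2 = card S2" and r12: "rank (S1 \<inter> S2) = card (S1 \<inter> S2)"
    by (rule rank_S; use S1_def S2_def in blast)+
  have mono: "rank S \<le> rank (S \<union> U)" for S by (rule rank_mono) blast
  have "card S1 + card S2 = card A + card (S1 \<inter> S2)"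
    using card_Un_Int[of S1 S2] finA union unfolding S1_def S2_def by simp
  moreover have "rank (A \<union> U) + rank ((S1 \<inter> S2) \<union> U) \<le> rank (S1 \<union> U) + rank (S2 \<union> U)"
  proof -
    have "(S1 \<union> U) \<union> (S2 \<union> U) = A \<union> U" "(S1 \<union> U) \<inter> (S2 \<union> U) = (S1 \<inter> S2) \<union> U"
      using union by blast+
    then show ?thesis using rank_submodular[of "S1 \<union> U" "S2 \<union> U"] by simp
  qed
  ultimately have "contract_rank (S1 \<inter> S2) U \<le> contract_rank S1 U + contract_rank S2 U"
    unfolding contract_rank_def
    using rank_basis_Un[OF A, of U] r1 r2 r12 mono[of S1] mono[of S2] mono[of "S1 \<inter> S2"] by linarith
  then show ?case
    using inter insert.IH insert.hyps unfolding S1_def S2_def by simp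
qed

lemma exchange_into_basis:
  assumes A: "basis A" and P: "P \<subseteq> A" and Y: "Y \<inter> A = {}" and indep: "(A - P) \<union> Y \<in> I"
  obtains X where "X \<subseteq> P" "card X = card Y" "(A - X) \<union> Y \<in> I"
proof -
  have finA: "finite A" using A basis_indep indep_finite by blast
  have finY: "finite Y" using indep indep_finite by blast
  obtain W where W: "W \<subseteq> A - ((A - P) \<union> Y)" "(A - P) \<union> Y \<union> W \<in> I"
      "card ((A - P) \<union> Y \<union> W) = card A"
    using augment_to_card[OF indep basis_indep[OF A] indep_card_le_basis[OF A indep] order.refl] by blast
  have WP: "W \<subseteq> P" using W(1) by blast
  have finW: "finite W" using finite_subset[OF WP finite_subset[OF P finA]] .
  have "card ((A - P) \<union> Y \<union> W) = card ((A - P) \<union> Y) + card W"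
    using W(1) finA finY finW by (intro card_Un_disjoint) auto
  also have "card ((A - P) \<union> Y) = card (A - P) + card Y"
    using Y finA finY by (intro card_Un_disjoint) auto
  also have "card (A - P) = card A - card P"
    using card_Diff_subset[OF finite_subset[OF P finA] P] .
  finally have "card A - card P + card Y + card W = card A" using W(3) by simp
  moreover have "card P \<le> card A" using P finA by (rule card_mono[rotated])
  moreover have "card (P - W) = card P - card W"
    using WP finW by (rule card_Diff_subset[rotated])
  ultimately have "card (P - W) = card Y" by linarith
  moreover have "(A - (P - W)) \<union> Y = (A - P) \<union> Y \<union> W" using WP P by blast
  ultimately show thesis using W(2) by (intro that[of "P - W"]) auto
qed

lemma exchange_card_le:
  assumes A: "basis A" and P: "P \<subseteq> A" and Y: "Y \<inter> A = {}" and indep: "(A - P) \<union> Y \<in> I"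
  shows "card Y \<le> card P"
proof -
  have finA: "finite A" using A basis_indep indep_finite by blast
  have "card ((A - P) \<union> Y) = card (A - P) + card Y"
    using Y finA indep indep_finite by (intro card_Un_disjoint) auto
  moreover have "card (A - P) + card P = card A"
    using P finA card_Diff_subset[OF finite_subset[OF P finA] P] card_mono[OF finA P] by simp
  ultimately show ?thesis using indep_card_le_basis[OF A indep] by linarith
qed

lemma extend_to_basis_through:
  assumes A: "basis A" and X: "X \<in> I" and S: "S \<in> I"
  obtains K where "K \<subseteq> (S \<union> A) - X" "basis (X \<union> K)" "card (S - X) \<le> card (K \<inter> S) + card (X - S)"
proof -
  have finX: "finite X" and finS: "finite S" using X S indep_finite by blast+
  obtain W where W: "W \<subseteq> S - X" "X \<union> W \<in> I" "card S \<le> card (X \<union> W)"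
  proof (cases "card X \<le> card S")
    case True
    then obtain W where "W \<subseteq> S - X" "X \<union> W \<in> I" "card (X \<union> W) = card S"
      using augment_to_card[OF X S True order.refl] by blast
    then show thesis using that[of W] by simp
  next
    case False
    then show thesis using that[of "{}"] X by simp
  qed
  obtain W' where W': "W' \<subseteq> A - (X \<union> W)" "X \<union> W \<union> W' \<in> I" "card (X \<union> W \<union> W') = card A"
    using augment_to_card[OF W(2) basis_indep[OF A] indep_card_le_basis[OF A W(2)] order.refl] by blast
  have "basis (X \<union> (W \<union> W'))"
    using W'(2,3) A unfolding basis_def by (simp add: Un_assoc)
  moreover have "card (S - X) \<le> card ((W \<union> W') \<inter> S) + card (X - S)"
  proof -
    have WS: "W \<subseteq> S" and "X \<inter> W = {}" using W(1) by blast+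
    then have "card (X \<union> W) = card X + card W"
      using card_Un_disjoint[OF finX finite_subset[OF WS finS]] by simp
    moreover have "card W \<le> card ((W \<union> W') \<inter> S)"
      using WS finS by (intro card_mono) auto
    moreover have "card S = card (S \<inter> X) + card (S - X)" "card X = card (S \<inter> X) + card (X - S)"
      using card_Int_Diff[OF finS, of X] card_Int_Diff[OF finX, of S] by (simp_all add: Int_commute)
    ultimately show ?thesis using W(3) by linarith
  qed
  moreover have "W \<union> W' \<subseteq> (S \<union> A) - X" using W(1) W'(1) by blast
  ultimately show thesis by (rule that[rotated])
qed

lemma basis_extension_intermediate_card:
  assumes C: "C \<inter> R = {}" and K1: "K1 \<subseteq> R" "basis (C \<union> K1)" and K2: "K2 \<subseteq> R" "basis (C \<union> K2)"
    and "card (K1 \<inter> P) \<le> t" "t \<le> card (K2 \<inter> P)"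
  shows "\<exists>K\<subseteq>R. basis (C \<union> K) \<and> card (K \<inter> P) = t"
proof -
  let ?F = "{K. K \<subseteq> R \<and> basis (C \<union> K)}"
  have fin: "finite (C \<union> K)" if "K \<in> ?F" for K
    using that basis_indep indep_finite by blast
  have "\<exists>y\<in>K' - K. insert y (K - {x}) \<in> ?F" if K: "K \<in> ?F" "K' \<in> ?F" "x \<in> K - K'" for K K' x
  proof -
    have "x \<in> (C \<union> K) - (C \<union> K')" using K C by blast
    then obtain y where y: "y \<in> (C \<union> K') - (C \<union> K)" "basis (insert y ((C \<union> K) - {x}))"
      using basis_exchange K by blast
    moreover have "insert y ((C \<union> K) - {x}) = C \<union> insert y (K - {x})" using K C by blast
    ultimately show ?thesis using K by auto
  qed
  moreover have "finite K" if "K \<in> ?F" for K using fin[OF that] by simp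
  moreover have "card K = card K'" if "K \<in> ?F" "K' \<in> ?F" for K K'
  proof -
    have "card (C \<union> K) = card (C \<union> K')" using that basis_card_eq by blast
    moreover have "card (C \<union> K) = card C + card K" "card (C \<union> K') = card C + card K'"
      using that fin C by (auto intro!: card_Un_disjoint)
    ultimately show ?thesis by simp
  qed
  ultimately obtain K where "K \<in> ?F" "card (K \<inter> P) = t"
    using exchange_family_intermediate_card[of ?F K1 K2 P t] assms by blast
  then show ?thesis by blast
qed

lemma double_exchange_basis_card:
  assumes A: "basis A" and P: "P \<subseteq> A" and Q: "Q \<subseteq> A" and PQ: "P \<inter> Q = {}"
    and Y: "Y1 \<inter> A = {}" "Y2 \<inter> A = {}" "Y1 \<inter> Y2 = {}"
    and K: "K \<subseteq> P \<union> Q" "basis ((A - P - Q) \<union> Y1 \<union> Y2 \<union> K)"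
  shows "card (K \<inter> P) + card (K \<inter> Q) + card Y1 + card Y2 = card P + card Q"
proof -
  have finA: "finite A" using A basis_indep indep_finite by blast
  have finY: "finite Y1" "finite Y2"
    using K(2) basis_indep indep_finite by (metis finite_Un)+
  have finPQ: "finite P" "finite Q" using finite_subset[OF P finA] finite_subset[OF Q finA] .
  have finK: "finite K" using finite_subset[OF K(1)] finPQ by simp
  have "((A - P - Q) \<union> Y1 \<union> Y2) \<inter> K = {}" using K(1) Y P Q by blast
  then have "card ((A - P - Q) \<union> Y1 \<union> Y2 \<union> K) = card ((A - P - Q) \<union> Y1 \<union> Y2) + card K"
    using finA finY finK by (intro card_Un_disjoint) auto
  also have "card ((A - P - Q) \<union> Y1 \<union> Y2) = card ((A - P - Q) \<union> Y1) + card Y2"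
    using finA finY Y by (intro card_Un_disjoint) auto
  also have "card ((A - P - Q) \<union> Y1) = card (A - P - Q) + card Y1"
    using finA finY Y by (intro card_Un_disjoint) auto
  also have "card K = card (K \<inter> P) + card (K \<inter> Q)"
  proof -
    have "K = (K \<inter> P) \<union> (K \<inter> Q)" using K(1) by blast
    then show ?thesis using card_Un_disjoint[of "K \<inter> P" "K \<inter> Q"] finK PQ by auto
  qed
  moreover have "card (A - P - Q) + card P + card Q = card A"
  proof -
    have "A - P - Q = A - (P \<union> Q)" by blast
    moreover have "card (A - (P \<union> Q)) + card (P \<union> Q) = card A"
      using P Q finA card_Diff_subset[of "P \<union> Q" A] card_mono[of A "P \<union> Q"] finite_subset[of "P \<union> Q" A]
      by simp
    ultimately show ?thesis using card_Un_disjoint[of P Q] PQ finite_subset[OF P finA] finite_subset[OF Q finA]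
      by simp
  qed
  ultimately show ?thesis using basis_card_eq[OF K(2) A] by linarith
qed

(* Extend C = (A - P - Q) \<union> Y1 \<union> Y2 to bases C \<union> K with K \<subseteq> P \<union> Q: one such K keeps at least
   card P - card Y1 elements of P, another at least card Q - card Y2 elements of Q, and a basis
   in between keeps exactly card P - card Y1 elements of P. *)
lemma double_exchange_disjoint:
  assumes A: "basis A" and P: "P \<subseteq> A" and Q: "Q \<subseteq> A" and PQ: "P \<inter> Q = {}"
    and Y: "Y1 \<inter> A = {}" "Y2 \<inter> A = {}" "Y1 \<inter> Y2 = {}"
    and indep1: "(A - P) \<union> Y1 \<in> I" and indep2: "(A - Q) \<union> Y2 \<in> I"
    and indep12: "(A - P - Q) \<union> Y1 \<union> Y2 \<in> I"
  obtains X1 X2 where "X1 \<subseteq> P" "X2 \<subseteq> Q" "card X1 = card Y1" "card X2 = card Y2"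
    "(A - X1 - X2) \<union> Y1 \<union> Y2 \<in> I"
proof -
  define C where "C = (A - P - Q) \<union> Y1 \<union> Y2"
  have C_disj: "C \<inter> (P \<union> Q) = {}" unfolding C_def using Y P Q by blast
  have split: "card (K \<inter> P) + card (K \<inter> Q) + card Y1 + card Y2 = card P + card Q"
    if "K \<subseteq> P \<union> Q" "basis (C \<union> K)" for K
    using double_exchange_basis_card[OF A P Q PQ Y that(1)] that(2) unfolding C_def .
  have Y1P: "card Y1 \<le> card P" and Y2Q: "card Y2 \<le> card Q"
    using exchange_card_le[OF A P Y(1) indep1] exchange_card_le[OF A Q Y(2) indep2] .
  have CI: "C \<in> I" using indep12 unfolding C_def .
  have extend: "\<exists>K\<subseteq>P \<union> Q. basis (C \<union> K) \<and> card (S - C) \<le> card (K \<inter> (S - C)) + card (C - S)"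
    if S: "S \<in> I" "S \<subseteq> A \<union> Y1 \<union> Y2" for S
  proof -
    obtain K where K: "K \<subseteq> (S \<union> A) - C" "basis (C \<union> K)" "card (S - C) \<le> card (K \<inter> S) + card (C - S)"
      by (rule extend_to_basis_through[OF A CI S(1)])
    moreover have "(S \<union> A) - C \<subseteq> P \<union> Q" using S(2) unfolding C_def by blast
    moreover have "K \<inter> S = K \<inter> (S - C)" using K(1) by blast
    ultimately show ?thesis by auto
  qed
  have "((A - Q) \<union> Y2) - C = P" "C - ((A - Q) \<union> Y2) = Y1" unfolding C_def using P Q PQ Y by blast+
  then obtain K1 where K1: "K1 \<subseteq> P \<union> Q" "basis (C \<union> K1)" "card P \<le> card (K1 \<inter> P) + card Y1"
    using extend[OF indep2] by auto
  have "((A - P) \<union> Y1) - C = Q" "C - ((A - P) \<union> Y1) = Y2" unfolding C_def using P Q PQ Y by blast+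
  then obtain K2 where K2: "K2 \<subseteq> P \<union> Q" "basis (C \<union> K2)" "card Q \<le> card (K2 \<inter> Q) + card Y2"
    using extend[OF indep1] by auto
  have "card (K2 \<inter> P) \<le> card P - card Y1" using split[OF K2(1,2)] K2(3) by linarith
  moreover have "card P - card Y1 \<le> card (K1 \<inter> P)" using K1(3) by linarith
  ultimately obtain K where K: "K \<subseteq> P \<union> Q" "basis (C \<union> K)" "card (K \<inter> P) = card P - card Y1"
    using basis_extension_intermediate_card[OF C_disj K2(1,2) K1(1,2)] by blast
  then have "card (K \<inter> Q) = card Q - card Y2" using split[OF K(1,2)] Y1P by linarith
  moreover have "card (P - K) = card P - card (K \<inter> P)" "card (Q - K) = card Q - card (K \<inter> Q)"
    using finite_subset[OF P] finite_subset[OF Q] A basis_indep indep_finite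
    by (metis card_Diff_subset_Int finite_Int inf_commute)+
  moreover have "(A - (P - K) - (Q - K)) \<union> Y1 \<union> Y2 = C \<union> K"
    unfolding C_def using K(1) P Q by blast
  ultimately show thesis
    using K(2,3) Y1P Y2Q basis_indep by (intro that[of "P - K" "Q - K"]) auto
qed

lemma double_exchange:
  assumes A: "basis A" and P: "P \<subseteq> A" and Q: "Q \<subseteq> A" and PQ: "P = Q \<or> P \<inter> Q = {}"
    and Y: "Y1 \<inter> A = {}" "Y2 \<inter> A = {}" "Y1 \<inter> Y2 = {}"
    and indep1: "(A - P) \<union> Y1 \<in> I" and indep2: "(A - Q) \<union> Y2 \<in> I"
    and indep12: "(A - P - Q) \<union> Y1 \<union> Y2 \<in> I"
  obtains X1 X2 where "X1 \<subseteq> P" "X2 \<subseteq> Q" "X1 \<inter> X2 = {}" "card X1 = card Y1" "card X2 = card Y2"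
    "(A - X1 - X2) \<union> Y1 \<union> Y2 \<in> I"
proof (cases "P = Q")
  case True
  have Y12: "(Y1 \<union> Y2) \<inter> A = {}" using Y by blast
  have "(A - P) \<union> (Y1 \<union> Y2) \<in> I" using indep12 True by (simp add: Un_assoc)
  then obtain X where X: "X \<subseteq> P" "card X = card (Y1 \<union> Y2)" "(A - X) \<union> (Y1 \<union> Y2) \<in> I"
    by (rule exchange_into_basis[OF A P Y12])
  have "finite Y1" "finite Y2" using indep_finite[OF indep1] indep_finite[OF indep2] by simp_all
  then have card_X: "card X = card Y1 + card Y2" using X(2) card_Un_disjoint Y(3) by simp
  then obtain X1 where X1: "X1 \<subseteq> X" "card X1 = card Y1"
    using obtain_subset_with_card_n[of "card Y1" X] by auto
  have "finite X" using finite_subset[OF X(1) finite_subset[OF P indep_finite[OF basis_indep[OF A]]]] .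
  then have "card (X - X1) = card Y2"
    using X1 card_X card_Diff_subset[OF finite_subset[OF X1(1)] X1(1)] by simp
  moreover have "(A - X1 - (X - X1)) \<union> Y1 \<union> Y2 = (A - X) \<union> (Y1 \<union> Y2)" using X1(1) by blast
  moreover have "X1 \<subseteq> P" "X - X1 \<subseteq> Q" "X1 \<inter> (X - X1) = {}" using X(1) X1(1) True by blast+
  ultimately show thesis using that X(3) X1(2) by simp
next
  case False
  then have PQ': "P \<inter> Q = {}" using PQ by blast
  obtain X1 X2 where X: "X1 \<subseteq> P" "X2 \<subseteq> Q" "card X1 = card Y1" "card X2 = card Y2"
      "(A - X1 - X2) \<union> Y1 \<union> Y2 \<in> I"
    by (rule double_exchange_disjoint[OF A P Q PQ' Y indep1 indep2 indep12])
  moreover have "X1 \<inter> X2 = {}" using X(1,2) PQ' by blast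
  ultimately show thesis by (intro that[of X1 X2])
qed

lemma augment_disjoint_pair:
  assumes indep1: "D \<union> Y1 \<in> I" and indep2: "D \<union> Y2 \<in> I" and disj: "D \<inter> Y1 = {}" "D \<inter> Y2 = {}"
    and "p \<le> card Y2" "p + q \<le> card Y1"
  obtains Z1 Z2 where "Z1 \<subseteq> Y1" "Z2 \<subseteq> Y2" "Z1 \<inter> Z2 = {}" "card Z1 = q" "card Z2 = p" "D \<union> Z1 \<union> Z2 \<in> I"
proof -
  have finD: "finite D" and finY1: "finite Y1"
    using indep_finite[OF indep1] by simp_all
  obtain Z2 where Z2: "Z2 \<subseteq> Y2" "card Z2 = p" "finite Z2"
    using obtain_subset_with_card_n[OF assms(5)] by blast
  have indepZ2: "D \<union> Z2 \<in> I" using indep_subset[OF indep2] Z2(1) by blast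
  have "D \<inter> Z2 = {}" using disj(2) Z2(1) by blast
  then have card_DZ2: "card (D \<union> Z2) = card D + p"
    using card_Un_disjoint[OF finD Z2(3)] Z2(2) by simp
  have "card (D \<union> Y1) = card D + card Y1"
    using card_Un_disjoint[OF finD finY1 disj(1)] .
  then obtain W where W: "W \<subseteq> (D \<union> Y1) - (D \<union> Z2)" "D \<union> Z2 \<union> W \<in> I"
      "card (D \<union> Z2 \<union> W) = card D + p + q"
    using augment_to_card[OF indepZ2 indep1, of "card D + p + q"] card_DZ2 assms(6) by auto
  have WY1: "W \<subseteq> Y1" and WZ2: "W \<inter> Z2 = {}" and disjW: "(D \<union> Z2) \<inter> W = {}"
    using W(1) by blast+
  have "finite (D \<union> Z2)" using finD Z2(3) by simp
  then have "card (D \<union> Z2 \<union> W) = card (D \<union> Z2) + card W"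
    using card_Un_disjoint[OF _ finite_subset[OF WY1 finY1] disjW] by blast
  then have "card W = q" using W(3) card_DZ2 by linarith
  moreover have "D \<union> W \<union> Z2 \<in> I"
  proof -
    have "D \<union> W \<union> Z2 = D \<union> Z2 \<union> W" by blast
    then show ?thesis using W(2) by (simp only:)
  qed
  ultimately show thesis using that[OF WY1 Z2(1) WZ2] Z2(2) by blast
qed

lemma exchange_two_parts:
  assumes A: "basis A" and P: "P \<subseteq> A" and Q: "Q \<subseteq> A" and PQ: "P = Q \<or> P \<inter> Q = {}"
    and Z: "Z1 \<inter> A = {}" "Z2 \<inter> A = {}"
    and indep1: "(A - P) \<union> Z1 \<in> I" and indep2: "(A - Q) \<union> Z2 \<in> I"
    and card: "p \<le> card Z2" "p + q \<le> card Z1"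
  obtains X1 X2 Y1 Y2 where "X1 \<subseteq> P" "X2 \<subseteq> Q" "X1 \<inter> X2 = {}" "card X1 = q" "card X2 = p"
    and "Y1 \<subseteq> Z1" "Y2 \<subseteq> Z2" "Y1 \<inter> Y2 = {}" "card Y1 = q" "card Y2 = p"
    and "(A - X1 - X2) \<union> Y1 \<union> Y2 \<in> I"
proof -
  have i1: "(A - P - Q) \<union> Z1 \<in> I" by (rule indep_subset[OF indep1]) blast
  have i2: "(A - P - Q) \<union> Z2 \<in> I" by (rule indep_subset[OF indep2]) blast
  have d: "(A - P - Q) \<inter> Z1 = {}" "(A - P - Q) \<inter> Z2 = {}" using Z by blast+
  obtain Y1 Y2 where Y: "Y1 \<subseteq> Z1" "Y2 \<subseteq> Z2" "Y1 \<inter> Y2 = {}" "card Y1 = q" "card Y2 = p"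
      "(A - P - Q) \<union> Y1 \<union> Y2 \<in> I"
    by (rule augment_disjoint_pair[OF i1 i2 d card])
  have j1: "(A - P) \<union> Y1 \<in> I" by (rule indep_subset[OF indep1]) (use Y(1) in blast)
  have j2: "(A - Q) \<union> Y2 \<in> I" by (rule indep_subset[OF indep2]) (use Y(2) in blast)
  have YA: "Y1 \<inter> A = {}" "Y2 \<inter> A = {}" using Y(1,2) Z by blast+
  obtain X1 X2 where X: "X1 \<subseteq> P" "X2 \<subseteq> Q" "X1 \<inter> X2 = {}" "card X1 = card Y1"
      "card X2 = card Y2" "(A - X1 - X2) \<union> Y1 \<union> Y2 \<in> I"
    by (rule double_exchange[OF A P Q PQ YA Y(3) j1 j2 Y(6)])
  show thesis using that[OF X(1-3) _ _ Y(1-5) X(6)] X(4,5) Y(4,5) by simp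
qed

end

lemma matroid_truncation:
  assumes "matroid E I"
  shows "matroid E {X\<in>I. card X \<le> k}"
  unfolding matroid_def
proof (intro conjI allI impI ballI)
  interpret Matroid E I by (rule Matroid.intro) (fact assms)
  show "finite E" by (rule finite_ground)
  show "{} \<in> {X\<in>I. card X \<le> k}" using empty_indep by simp
  show "X \<subseteq> E" if "X \<in> {X\<in>I. card X \<le> k}" for X using that indep_subset_ground by blast
  show "X \<in> {X\<in>I. card X \<le> k}" if "Y \<in> {X\<in>I. card X \<le> k}" "X \<subseteq> Y" for X Y
    using that indep_subset[of Y X] card_mono[OF indep_finite, of Y X] by auto
  show "\<exists>e\<in>Y - X. insert e X \<in> {X\<in>I. card X \<le> k}"
    if XY: "X \<in> {X\<in>I. card X \<le> k}" "Y \<in> {X\<in>I. card X \<le> k}" "card X < card Y" for X Y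
  proof -
    obtain e where "e \<in> Y - X" "insert e X \<in> I" using augment[of X Y] XY by auto
    moreover have "card (insert e X) \<le> card Y"
      using XY \<open>e \<in> Y - X\<close> indep_finite by (simp add: card_insert_if)
    ultimately show ?thesis using XY by auto
  qed
qed

locale exchange_pair = Matroid +
  fixes A B :: "'a set"
  assumes basis_A: "basis A" and indep_B: "B \<in> I" and disjoint_AB: "A \<inter> B = {}"
begin

lemma finite_A: "finite A" and finite_B: "finite B"
  using basis_A basis_indep indep_B indep_finite by blast+

lemma weight_preserving_swap:
  assumes X: "X \<subseteq> A" and Y: "Y \<subseteq> B" "Y \<noteq> {}" and card: "card X = card Y"
    and weight: "wsum w X = wsum w Y" and indep: "(A - X) \<union> Y \<in> I"
  shows "\<exists>A'\<in>I. A' \<noteq> A \<and> wsum w A' = wsum w A \<and> card A' = card A"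
proof (intro bexI conjI)
  have finY: "finite Y" using finite_subset[OF Y(1) finite_B] .
  have YA: "Y \<inter> A = {}" using Y(1) disjoint_AB by blast
  show "(A - X) \<union> Y \<noteq> A" using Y YA by blast
  show "wsum w ((A - X) \<union> Y) = wsum w A"
    using wsum_exchange[OF finite_A finY X YA] weight by simp
  have "card ((A - X) \<union> Y) = card (A - X) + card Y"
    using finite_A finY YA by (intro card_Un_disjoint) auto
  then show "card ((A - X) \<union> Y) = card A"
    using card card_Diff_subset[OF finite_subset[OF X finite_A] X] card_mono[OF finite_A X] by simp
qed (fact indep)

lemma contract_rank_level_witness:
  obtains Z where "Z \<subseteq> {b\<in>B. w b = \<beta>}" "Z \<inter> A = {}" "(A - {a\<in>A. w a = \<alpha>}) \<union> Z \<in> I"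
    "card Z = contract_rank (A - {a\<in>A. w a = \<alpha>}) {b\<in>B. w b = \<beta>}"
proof -
  have "A - {a\<in>A. w a = \<alpha>} \<in> I" by (rule indep_subset[OF basis_indep[OF basis_A]]) blast
  then obtain Z where Z: "Z \<subseteq> {b\<in>B. w b = \<beta>} - (A - {a\<in>A. w a = \<alpha>})"
      "(A - {a\<in>A. w a = \<alpha>}) \<union> Z \<in> I" "card Z = contract_rank (A - {a\<in>A. w a = \<alpha>}) {b\<in>B. w b = \<beta>}"
    by (rule contract_rank_witness)
  moreover have "Z \<subseteq> {b\<in>B. w b = \<beta>}" "Z \<inter> A = {}" using Z(1) disjoint_AB by blast+
  ultimately show thesis by (intro that)
qed

lemma exchange_same_level:
  assumes "contract_rank (A - {a\<in>A. w a = \<alpha>}) {b\<in>B. w b = \<alpha>} \<noteq> 0"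
  shows "\<exists>A'\<in>I. A' \<noteq> A \<and> wsum w A' = wsum w A \<and> card A' = card A"
proof -
  obtain Y where Y: "Y \<subseteq> {b\<in>B. w b = \<alpha>}" "Y \<inter> A = {}" "(A - {a\<in>A. w a = \<alpha>}) \<union> Y \<in> I"
      "card Y = contract_rank (A - {a\<in>A. w a = \<alpha>}) {b\<in>B. w b = \<alpha>}"
    by (rule contract_rank_level_witness)
  have YB: "Y \<subseteq> B" and "Y \<noteq> {}" using Y(1,4) assms by auto
  obtain X where X: "X \<subseteq> {a\<in>A. w a = \<alpha>}" "card X = card Y" "(A - X) \<union> Y \<in> I"
    by (rule exchange_into_basis[OF basis_A _ Y(2,3)]) blast
  have "wsum w X = int (card X) * \<alpha>" using X(1) by (intro wsum_const) auto
  moreover have "wsum w Y = int (card Y) * \<alpha>" using Y(1) by (intro wsum_const) auto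
  moreover have XA: "X \<subseteq> A" using X(1) by blast
  ultimately show ?thesis
    using weight_preserving_swap[OF XA YB \<open>Y \<noteq> {}\<close> X(2) _ X(3)] X(2) by simp
qed

lemma exchange_opposite_levels:
  assumes "\<alpha> < \<beta>" "\<delta> < \<gamma>"
    and big1: "(\<beta> - \<alpha>) + (\<gamma> - \<delta>) \<le> int (contract_rank (A - {a\<in>A. w a = \<alpha>}) {b\<in>B. w b = \<beta>})"
    and big2: "(\<beta> - \<alpha>) + (\<gamma> - \<delta>) \<le> int (contract_rank (A - {a\<in>A. w a = \<gamma>}) {b\<in>B. w b = \<delta>})"
  shows "\<exists>A'\<in>I. A' \<noteq> A \<and> wsum w A' = wsum w A \<and> card A' = card A"
proof -
  define p q where "p = nat (\<beta> - \<alpha>)" and "q = nat (\<gamma> - \<delta>)"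
  let ?P = "{a\<in>A. w a = \<alpha>}" and ?Q = "{a\<in>A. w a = \<gamma>}"
  have pq: "\<beta> = \<alpha> + int p" "\<gamma> = \<delta> + int q" using assms(1,2) unfolding p_def q_def by simp_all
  obtain Z1 where Z1: "Z1 \<subseteq> {b\<in>B. w b = \<beta>}" "Z1 \<inter> A = {}" "(A - ?P) \<union> Z1 \<in> I"
      "card Z1 = contract_rank (A - ?P) {b\<in>B. w b = \<beta>}"
    by (rule contract_rank_level_witness)
  obtain Z2 where Z2: "Z2 \<subseteq> {b\<in>B. w b = \<delta>}" "Z2 \<inter> A = {}" "(A - ?Q) \<union> Z2 \<in> I"
      "card Z2 = contract_rank (A - ?Q) {b\<in>B. w b = \<delta>}"
    by (rule contract_rank_level_witness)
  have card: "p \<le> card Z2" "p + q \<le> card Z1" using big1 big2 Z1(4) Z2(4) pq by linarith+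
  have PA: "?P \<subseteq> A" and QA: "?Q \<subseteq> A" and PQ: "?P = ?Q \<or> ?P \<inter> ?Q = {}" by auto
  obtain X1 X2 Y1 Y2 where X: "X1 \<subseteq> ?P" "X2 \<subseteq> ?Q" "X1 \<inter> X2 = {}" "card X1 = q" "card X2 = p"
    and Y: "Y1 \<subseteq> Z1" "Y2 \<subseteq> Z2" "Y1 \<inter> Y2 = {}" "card Y1 = q" "card Y2 = p"
    and indep: "(A - X1 - X2) \<union> Y1 \<union> Y2 \<in> I"
    by (rule exchange_two_parts[OF basis_A PA QA PQ Z1(2) Z2(2) Z1(3) Z2(3) card])
  have "X1 \<subseteq> A" "X2 \<subseteq> A" using X(1,2) by blast+
  then have finX: "finite X1" "finite X2" using finite_subset[OF _ finite_A] by blast+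
  have YB: "Y1 \<union> Y2 \<subseteq> B" using Y(1,2) Z1(1) Z2(1) by blast
  then have finY: "finite Y1" "finite Y2" using finite_subset[OF YB finite_B] by simp_all
  have "wsum w (X1 \<union> X2) = int q * \<alpha> + int p * \<gamma>"
    using wsum_Un_levels[OF finX X(3), of w \<alpha> \<gamma>] X(1,2,4,5) by auto
  also have "\<dots> = int q * \<beta> + int p * \<delta>"
    unfolding pq by (simp add: algebra_simps)
  also have "\<dots> = wsum w (Y1 \<union> Y2)"
  proof -
    have "w y = \<beta>" if "y \<in> Y1" for y using that Y(1) Z1(1) by blast
    moreover have "w y = \<delta>" if "y \<in> Y2" for y using that Y(2) Z2(1) by blast
    ultimately show ?thesis using wsum_Un_levels[OF finY Y(3)] Y(4,5) by simp
  qed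
  finally have weight: "wsum w (X1 \<union> X2) = wsum w (Y1 \<union> Y2)" .
  have "card (X1 \<union> X2) = card (Y1 \<union> Y2)"
    using card_Un_disjoint[OF finX X(3)] card_Un_disjoint[OF finY Y(3)] X(4,5) Y(4,5) by simp
  moreover have "Y1 \<union> Y2 \<noteq> {}" using Y(4) assms(2) unfolding q_def by auto
  moreover have "(A - (X1 \<union> X2)) \<union> (Y1 \<union> Y2) \<in> I"
    using indep by (simp add: Diff_Un Un_assoc set_diff_eq Int_commute)
  moreover have "X1 \<union> X2 \<subseteq> A" using X(1,2) by blast
  ultimately show ?thesis using weight_preserving_swap[OF _ YB] weight by blast
qed

lemma card_le_sum_contract_rank_levels:
  assumes "U \<subseteq> B" "finite C" "\<And>a. a \<in> A \<Longrightarrow> u a \<in> C"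
  shows "card U \<le> (\<Sum>\<alpha>\<in>C. contract_rank (A - {a\<in>A. u a = \<alpha>}) U)"
proof -
  have "A - {a\<in>A. u a \<in> C} = {}" using assms(3) by blast
  moreover have "contract_rank {} U = card U"
    using rank_indep[OF indep_subset[OF indep_B assms(1)]] rank_indep[OF empty_indep]
    unfolding contract_rank_def by simp
  ultimately have "contract_rank (A - {a\<in>A. u a \<in> C}) U = card U" by (simp only:)
  with contract_rank_fibres_le[OF basis_A assms(2), of u U] show ?thesis by (simp only:)
qed

lemma contract_rank_below_threshold_le:
  fixes u :: "'a \<Rightarrow> int" and \<Delta> c :: int
  assumes "0 \<le> \<Delta>" and bounded: "\<And>x. x \<in> A \<union> B \<Longrightarrow> -\<Delta> \<le> u x \<and> u x \<le> \<Delta>"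
    and small: "\<And>\<alpha> \<beta>. \<alpha> \<in> {-\<Delta>..\<Delta>} \<Longrightarrow> \<beta> \<in> {-\<Delta>..\<Delta>} \<Longrightarrow> \<beta> \<le> \<alpha> \<Longrightarrow>
      int (contract_rank (A - {a\<in>A. u a = \<alpha>}) {b\<in>B. u b = \<beta>}) \<le> c"
    and \<alpha>: "\<alpha> \<in> {-\<Delta>..\<Delta>}"
  shows "int (contract_rank (A - {a\<in>A. u a = \<alpha>}) {b\<in>B. u b \<le> \<theta>})
    \<le> int (card {a\<in>{a\<in>A. u a < \<theta>}. u a = \<alpha>}) + (2*\<Delta>+1) * c"
proof (cases "\<alpha> < \<theta>")
  case True
  have "A - (A - {a\<in>A. u a = \<alpha>}) = {a\<in>{a\<in>A. u a < \<theta>}. u a = \<alpha>}" using True by auto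
  then have "contract_rank (A - {a\<in>A. u a = \<alpha>}) {b\<in>B. u b \<le> \<theta>} \<le> card {a\<in>{a\<in>A. u a < \<theta>}. u a = \<alpha>}"
    using contract_rank_le_card_diff[OF basis_A Diff_subset, of "{a\<in>A. u a = \<alpha>}"] by (simp only:)
  moreover have "0 \<le> (2*\<Delta>+1) * c" using small[of "-\<Delta>" "-\<Delta>"] assms(1) by simp
  ultimately show ?thesis by linarith
next
  case False
  have "{b\<in>B. u b \<le> \<theta>} = (\<Union>\<beta>\<in>{-\<Delta>..\<theta>}. {b\<in>B. u b = \<beta>})" using bounded by force
  then have "int (contract_rank (A - {a\<in>A. u a = \<alpha>}) {b\<in>B. u b \<le> \<theta>})
      \<le> (\<Sum>\<beta>\<in>{-\<Delta>..\<theta>}. int (contract_rank (A - {a\<in>A. u a = \<alpha>}) {b\<in>B. u b = \<beta>}))"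
    using contract_rank_UN_le[of "{-\<Delta>..\<theta>}" "A - {a\<in>A. u a = \<alpha>}" "\<lambda>\<beta>. {b\<in>B. u b = \<beta>}"]
    by (simp flip: of_nat_sum)
  also have "\<dots> \<le> (\<Sum>\<beta>\<in>{-\<Delta>..\<theta>}. c)"
    using \<alpha> False by (intro sum_mono small) auto
  also have "\<dots> \<le> (2*\<Delta>+1) * c"
    using \<alpha> False small[of "-\<Delta>" "-\<Delta>"] assms(1) by (simp add: mult_right_mono)
  finally show ?thesis by simp
qed

lemma card_below_threshold_le:
  fixes u :: "'a \<Rightarrow> int" and \<Delta> c :: int
  assumes "0 \<le> \<Delta>" and bounded: "\<And>x. x \<in> A \<union> B \<Longrightarrow> -\<Delta> \<le> u x \<and> u x \<le> \<Delta>"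
    and small: "\<And>\<alpha> \<beta>. \<alpha> \<in> {-\<Delta>..\<Delta>} \<Longrightarrow> \<beta> \<in> {-\<Delta>..\<Delta>} \<Longrightarrow> \<beta> \<le> \<alpha> \<Longrightarrow>
      int (contract_rank (A - {a\<in>A. u a = \<alpha>}) {b\<in>B. u b = \<beta>}) \<le> c"
  shows "int (card {b\<in>B. u b \<le> \<theta>}) \<le> int (card {a\<in>A. u a < \<theta>}) + (2*\<Delta>+1)^2 * c"
proof -
  let ?C = "{-\<Delta>..\<Delta>}"
  have "card {b\<in>B. u b \<le> \<theta>} \<le> (\<Sum>\<alpha>\<in>?C. contract_rank (A - {a\<in>A. u a = \<alpha>}) {b\<in>B. u b \<le> \<theta>})"
    by (rule card_le_sum_contract_rank_levels) (use bounded in auto)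
  also have "int \<dots> \<le> (\<Sum>\<alpha>\<in>?C. int (card {a\<in>{a\<in>A. u a < \<theta>}. u a = \<alpha>}) + (2*\<Delta>+1) * c)"
    unfolding of_nat_sum by (intro sum_mono contract_rank_below_threshold_le[OF assms])
  also have "\<dots> = int (\<Sum>\<alpha>\<in>?C. card {a\<in>{a\<in>A. u a < \<theta>}. u a = \<alpha>}) + int (card ?C) * ((2*\<Delta>+1) * c)"
    by (simp add: sum.distrib)
  also have "(\<Sum>\<alpha>\<in>?C. card {a\<in>{a\<in>A. u a < \<theta>}. u a = \<alpha>}) = card {a\<in>{a\<in>A. u a < \<theta>}. u a \<in> ?C}"
    by (rule sum_card_fibres) (simp_all add: finite_A)
  also have "{a\<in>{a\<in>A. u a < \<theta>}. u a \<in> ?C} = {a\<in>A. u a < \<theta>}" using bounded by auto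
  finally show ?thesis using assms(1) by (simp add: power2_eq_square)
qed

lemma weight_difference_bound:
  fixes u :: "'a \<Rightarrow> int" and \<Delta> c :: int
  assumes "0 \<le> \<Delta>" and bounded: "\<And>x. x \<in> A \<union> B \<Longrightarrow> -\<Delta> \<le> u x \<and> u x \<le> \<Delta>"
    and small: "\<And>\<alpha> \<beta>. \<alpha> \<in> {-\<Delta>..\<Delta>} \<Longrightarrow> \<beta> \<in> {-\<Delta>..\<Delta>} \<Longrightarrow> \<beta> \<le> \<alpha> \<Longrightarrow>
      int (contract_rank (A - {a\<in>A. u a = \<alpha>}) {b\<in>B. u b = \<beta>}) \<le> c"
  shows "int (card B) * (\<Delta> + 1) - wsum u B \<le> int (card A) * \<Delta> - wsum u A + (2*\<Delta>+1)^3 * c"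
proof -
  let ?C = "{-\<Delta>..\<Delta>}"
  have sum_B: "(\<Sum>\<theta>\<in>?C. int (card {b\<in>B. u b \<le> \<theta>})) = (\<Sum>b\<in>B. \<Delta> - u b + 1)"
    by (rule sum_card_threshold[OF finite_B]) (use bounded in force)
  have "{a\<in>A. u a < \<theta>} = {a\<in>A. u a + 1 \<le> \<theta>}" for \<theta> by auto
  then have "(\<Sum>\<theta>\<in>?C. int (card {a\<in>A. u a < \<theta>})) = (\<Sum>a\<in>A. \<Delta> - (u a + 1) + 1)"
    by (simp only:) (rule sum_card_threshold[OF finite_A], use bounded in force)
  then have sum_A: "(\<Sum>\<theta>\<in>?C. int (card {a\<in>A. u a < \<theta>})) = (\<Sum>a\<in>A. \<Delta> - u a)" by simp
  have "(\<Sum>\<theta>\<in>?C. int (card {b\<in>B. u b \<le> \<theta>})) \<le> (\<Sum>\<theta>\<in>?C. int (card {a\<in>A. u a < \<theta>}) + (2*\<Delta>+1)^2 * c)"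
    by (intro sum_mono card_below_threshold_le[OF assms])
  also have "\<dots> = (\<Sum>\<theta>\<in>?C. int (card {a\<in>A. u a < \<theta>})) + (2*\<Delta>+1)^3 * c"
    using assms(1) by (simp add: sum.distrib power2_eq_square power3_eq_cube)
  finally show ?thesis
    unfolding sum_A sum_B wsum_def by (simp add: sum.distrib sum_subtractf algebra_simps)
qed

lemma small_contract_ranks_one_side:
  fixes w :: "'a \<Rightarrow> int" and \<Delta> :: int
  assumes none: "\<not> (\<exists>A'\<in>I. A' \<noteq> A \<and> wsum w A' = wsum w A \<and> card A' = card A)"
  defines "\<rho> \<equiv> \<lambda>\<alpha> \<beta>. int (contract_rank (A - {a\<in>A. w a = \<alpha>}) {b\<in>B. w b = \<beta>})"
  shows "(\<forall>\<alpha>\<in>{-\<Delta>..\<Delta>}. \<forall>\<beta>\<in>{-\<Delta>..\<Delta>}. \<alpha> < \<beta> \<longrightarrow> \<rho> \<alpha> \<beta> \<le> 4*\<Delta>)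
       \<or> (\<forall>\<alpha>\<in>{-\<Delta>..\<Delta>}. \<forall>\<beta>\<in>{-\<Delta>..\<Delta>}. \<beta> < \<alpha> \<longrightarrow> \<rho> \<alpha> \<beta> \<le> 4*\<Delta>)"
proof (rule ccontr)
  assume "\<not> ?thesis"
  then obtain \<alpha> \<beta> \<gamma> \<delta> where h: "\<alpha> \<in> {-\<Delta>..\<Delta>}" "\<beta> \<in> {-\<Delta>..\<Delta>}" "\<alpha> < \<beta>" "4*\<Delta> < \<rho> \<alpha> \<beta>"
    "\<gamma> \<in> {-\<Delta>..\<Delta>}" "\<delta> \<in> {-\<Delta>..\<Delta>}" "\<delta> < \<gamma>" "4*\<Delta> < \<rho> \<gamma> \<delta>"
    unfolding not_le[symmetric] by blast
  have "\<exists>A'\<in>I. A' \<noteq> A \<and> wsum w A' = wsum w A \<and> card A' = card A"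
    by (rule exchange_opposite_levels[where \<alpha>=\<alpha> and \<beta>=\<beta> and \<gamma>=\<gamma> and \<delta>=\<delta>])
      (use h in \<open>auto simp: \<rho>_def\<close>)
  with none show False ..
qed

lemma exists_equal_weight_exchange:
  fixes w :: "'a \<Rightarrow> int" and \<Delta> :: int
  assumes "0 < \<Delta>" and bounded: "\<And>x. x \<in> A \<union> B \<Longrightarrow> -\<Delta> \<le> w x \<and> w x \<le> \<Delta>"
    and "card B = card A"
    and large: "4*\<Delta>*(2*\<Delta>+1)^3 + \<bar>wsum w A - wsum w B\<bar> < int (card A)"
  shows "\<exists>A'\<in>I. A' \<noteq> A \<and> wsum w A' = wsum w A \<and> card A' = card A"
proof (rule ccontr)
  assume none: "\<not> ?thesis"
  let ?C = "{-\<Delta>..\<Delta>}"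
  let ?\<rho> = "\<lambda>\<alpha> \<beta>. int (contract_rank (A - {a\<in>A. w a = \<alpha>}) {b\<in>B. w b = \<beta>})"
  have "contract_rank (A - {a\<in>A. w a = \<alpha>}) {b\<in>B. w b = \<alpha>} = 0" for \<alpha>
    using exchange_same_level none by blast
  then have diag: "?\<rho> \<alpha> \<alpha> \<le> 4*\<Delta>" for \<alpha> using assms(1) by simp
  have card_terms: "int (card B) * (\<Delta> + 1) = int (card A) * \<Delta> + int (card A)"
    "(2*\<Delta>+1)^3 * (4*\<Delta>) = 4*\<Delta>*(2*\<Delta>+1)^3"
    using \<open>card B = card A\<close> by (simp_all add: algebra_simps)
  from small_contract_ranks_one_side[OF none, of \<Delta>] show False
  proof
    assume up: "\<forall>\<alpha>\<in>?C. \<forall>\<beta>\<in>?C. \<alpha> < \<beta> \<longrightarrow> ?\<rho> \<alpha> \<beta> \<le> 4*\<Delta>"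
    \<comment> \<open>For the weights \<open>-w\<close> these are the ranks below the diagonal.\<close>
    have "int (card B) * (\<Delta> + 1) - wsum (\<lambda>x. - w x) B
        \<le> int (card A) * \<Delta> - wsum (\<lambda>x. - w x) A + (2*\<Delta>+1)^3 * (4*\<Delta>)"
    proof (rule weight_difference_bound)
      show "-\<Delta> \<le> - w x \<and> - w x \<le> \<Delta>" if "x \<in> A \<union> B" for x using bounded[OF that] by linarith
      show "int (contract_rank (A - {a\<in>A. - w a = \<alpha>}) {b\<in>B. - w b = \<beta>}) \<le> 4*\<Delta>"
        if "\<alpha> \<in> ?C" "\<beta> \<in> ?C" "\<beta> \<le> \<alpha>" for \<alpha> \<beta>
      proof -
        have "{a\<in>A. - w a = \<alpha>} = {a\<in>A. w a = - \<alpha>}" "{b\<in>B. - w b = \<beta>} = {b\<in>B. w b = - \<beta>}"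
          by auto
        then show ?thesis using up diag[of "-\<alpha>"] that by (cases "\<alpha> = \<beta>") auto
      qed
    qed (use assms(1) in simp)
    then show False using large card_terms abs_ge_minus_self[of "wsum w A - wsum w B"]
      unfolding wsum_uminus by linarith
  next
    assume down: "\<forall>\<alpha>\<in>?C. \<forall>\<beta>\<in>?C. \<beta> < \<alpha> \<longrightarrow> ?\<rho> \<alpha> \<beta> \<le> 4*\<Delta>"
    have "int (card B) * (\<Delta> + 1) - wsum w B \<le> int (card A) * \<Delta> - wsum w A + (2*\<Delta>+1)^3 * (4*\<Delta>)"
    proof (rule weight_difference_bound)
      show "?\<rho> \<alpha> \<beta> \<le> 4*\<Delta>" if "\<alpha> \<in> ?C" "\<beta> \<in> ?C" "\<beta> \<le> \<alpha>" for \<alpha> \<beta>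
        using down diag[of \<alpha>] that by (cases "\<alpha> = \<beta>") auto
    qed (use assms(1) bounded in auto)
    then show False using large card_terms abs_ge_self[of "wsum w A - wsum w B"] by linarith
  qed
qed

end

lemma cube_bound_less_fifth_power:
  fixes \<Delta> :: int
  assumes "0 \<le> \<Delta>"
  shows "4 * \<Delta> * (2 * \<Delta> + 1) ^ 3 < (2 * \<Delta> + 1) ^ 5"
proof -
  have "(2 * \<Delta> + 1) ^ 2 = 4 * (\<Delta> * \<Delta>) + 4 * \<Delta> + 1" by (simp add: power2_eq_square algebra_simps)
  moreover have "0 \<le> \<Delta> * \<Delta>" by simp
  ultimately have "4 * \<Delta> < (2 * \<Delta> + 1) ^ 2" by linarith
  then have "4 * \<Delta> * (2 * \<Delta> + 1) ^ 3 < (2 * \<Delta> + 1) ^ 2 * (2 * \<Delta> + 1) ^ 3"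
    using assms by (intro mult_strict_right_mono) simp_all
  then show ?thesis by (simp flip: power_add)
qed

theorem theorem6:
  fixes E :: "'a set" and I :: "'a set set" and w :: "'a \<Rightarrow> int"
    and \<Delta> :: int and \<mu> :: real and A B :: "'a set"
  assumes "matroid E I"
    and "\<Delta> > 0"
    and "\<forall>e\<in>E. -\<Delta> \<le> w e \<and> w e \<le> \<Delta>"
    and "\<mu> \<ge> 0"
    and "A \<in> I" and "B \<in> I" and "A \<inter> B = {}"
    and "card A = card B"
    and "real_of_int \<bar>wsum w A - wsum w B\<bar> \<le> \<mu>"
    and "real (card A) \<ge> real_of_int ((2 * \<Delta> + 1) ^ 5) + \<mu>"
  shows "\<exists>A'\<in>I. A' \<noteq> A \<and> wsum w A' = wsum w A \<and> card A' = card A"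
proof -
  \<comment> \<open>Truncating at \<open>card A\<close> makes \<open>A\<close> a basis and keeps \<open>B\<close> independent.\<close>
  let ?J = "{X\<in>I. card X \<le> card A}"
  interpret J: Matroid E ?J
    by (rule Matroid.intro) (rule matroid_truncation[OF assms(1)])
  have "J.basis A" unfolding J.basis_def using assms(5) by auto
  then interpret exchange_pair E ?J A B
    using assms(6-8) by unfold_locales auto
  have "A \<union> B \<subseteq> E" using assms(1,5,6) unfolding matroid_def by blast
  then have bounded: "-\<Delta> \<le> w x \<and> w x \<le> \<Delta>" if "x \<in> A \<union> B" for x using assms(3) that by blast
  have "(2 * \<Delta> + 1) ^ 5 + \<bar>wsum w A - wsum w B\<bar> \<le> int (card A)"
    using assms(9,10) by linarith
  then have "4 * \<Delta> * (2 * \<Delta> + 1) ^ 3 + \<bar>wsum w A - wsum w B\<bar> < int (card A)"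
    using cube_bound_less_fifth_power[of \<Delta>] assms(2) by linarith
  then obtain A' where "A' \<in> ?J" "A' \<noteq> A" "wsum w A' = wsum w A" "card A' = card A"
    using exists_equal_weight_exchange[where w=w, OF assms(2) bounded assms(8)[symmetric]] by auto
  then show ?thesis by auto
qed

end
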